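(* Let $\mathcal{C}$ be an $(n,k,3)$ binary linear code. Then the extended code $\mathcal{C}'$ is an $(n+1,k,4)$ code with $$\rho(\mathcal{C}') \le 2\rho(\mathcal{C}) = 2r(\mathcal{C}') - 2.$$
   Context: An $(n,k,d)$ code is a linear code of length $n$, dimension $k$ and minimum Hamming distance $d$. The extended code $\mathcal{C}'$ of a binary code $\mathcal{C}$ of length $n$ is obtained by appending to each codeword an overall parity-check bit (the sum mod 2 of its coordinates). A parity-check matrix for a linear code $\mathcal{C}$ is any matrix (possibly with linearly dependent rows) whose rows span $\mathcal{C}^\perp$. The redundancy $r(\mathcal{C})$ is the minimum number of rows of a parity-check matrix for $\mathcal{C}$. For a parity-check matrix $H$, the stopping distance $s(H)$ is the largest integer such that for every set of $s(H)-1$ or fewer columns of $H$, the projection of $H$ onto those columns contains at least one row of Hamming weight exactly one. The stopping redundancy $\rho(\mathcal{C})$ is the smallest number of rows of a parity-check matrix $H$ for $\mathcal{C}$ with $s(H) = d(\mathcal{C})$, the minimum distance of $\mathcal{C}$. *)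

theory Defs
  imports Main
begin

text \<open>Binary words of length n are represented by their supports, i.e. subsets of
  {..<n}. Addition over GF(2) is symmetric difference; the GF(2) inner product of
  x and y is the parity of card (x \<inter> y).\<close>

definition binary_linear_code :: "nat \<Rightarrow> nat set set \<Rightarrow> bool" where
  "binary_linear_code n C \<longleftrightarrow>
     C \<subseteq> Pow {..<n} \<and> {} \<in> C \<and> (\<forall>x\<in>C. \<forall>y\<in>C. (x - y) \<union> (y - x) \<in> C)"

text \<open>The code has dimension k (as a GF(2)-space) iff it has 2^k codewords.\<close>
definition code_dim :: "nat set set \<Rightarrow> nat \<Rightarrow> bool" where
  "code_dim C k \<longleftrightarrow> card C = 2 ^ k"

text \<open>d is the minimum Hamming distance (= minimum nonzero weight for linear codes).\<close>
definition has_min_dist :: "nat set set \<Rightarrow> nat \<Rightarrow> bool" where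
  "has_min_dist C d \<longleftrightarrow>
     (\<exists>x\<in>C. x \<noteq> {} \<and> card x = d) \<and> (\<forall>x\<in>C. x \<noteq> {} \<longrightarrow> d \<le> card x)"

definition min_dist :: "nat set set \<Rightarrow> nat" where
  "min_dist C = (LEAST w. \<exists>x\<in>C. x \<noteq> {} \<and> card x = w)"

text \<open>Extended code: append overall parity-check bit at coordinate n.\<close>
definition extended_code :: "nat \<Rightarrow> nat set set \<Rightarrow> nat set set" where
  "extended_code n C = (\<lambda>x. if odd (card x) then insert n x else x) ` C"

definition dual_code :: "nat \<Rightarrow> nat set set \<Rightarrow> nat set set" where
  "dual_code n C = {y. y \<subseteq> {..<n} \<and> (\<forall>x\<in>C. even (card (x \<inter> y)))}"

text \<open>GF(2)-span of a list of rows: all sums of subsets of the rows.\<close>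
definition gf2_span :: "nat set list \<Rightarrow> nat set set" where
  "gf2_span H = {{i. odd (card {h\<in>T. i \<in> h})} | T. T \<subseteq> set H}"

text \<open>H (a list of rows, possibly dependent or repeated) is a parity-check matrix.\<close>
definition is_pcm :: "nat \<Rightarrow> nat set set \<Rightarrow> nat set list \<Rightarrow> bool" where
  "is_pcm n C H \<longleftrightarrow> (\<forall>h\<in>set H. h \<subseteq> {..<n}) \<and> gf2_span H = dual_code n C"

definition redundancy :: "nat \<Rightarrow> nat set set \<Rightarrow> nat" where
  "redundancy n C = (LEAST m. \<exists>H. is_pcm n C H \<and> length H = m)"

definition stopping_set :: "nat set list \<Rightarrow> nat set \<Rightarrow> bool" where
  "stopping_set H S \<longleftrightarrow> (\<forall>h\<in>set H. card (h \<inter> S) \<noteq> 1)"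

text \<open>Stopping distance: size of smallest nonempty stopping set among columns {..<n}
  (equivalently the largest s such that every nonempty set of at most s-1 columns
  has a row of weight one on it).\<close>
definition stopping_distance :: "nat \<Rightarrow> nat set list \<Rightarrow> nat" where
  "stopping_distance n H =
     (LEAST s. \<exists>S. S \<subseteq> {..<n} \<and> S \<noteq> {} \<and> stopping_set H S \<and> card S = s)"

definition stopping_redundancy :: "nat \<Rightarrow> nat set set \<Rightarrow> nat" where
  "stopping_redundancy n C =
     (LEAST m. \<exists>H. is_pcm n C H \<and> stopping_distance n H = min_dist C \<and> length H = m)"

end

theory Submission
  imports Defs
begin

text \<open>For d = 3 every parity-check matrix H of C already has stopping distance 3: a stopping set
  of at most two columns meets every row of H evenly, so it is the support of a codeword of weight
  at most two. Hence \<rho>(C) = r(C). The dual of the extended code is the dual of C plus the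
  all-ones word u, whence r(C') = r(C) + 1. Finally, the rows of H together with their complements
  u - h form a parity-check matrix of C' of stopping distance 4: a stopping set of three columns is
  split by no row of H, so any two of its columns form a codeword of weight 2 of C'.\<close>

lemma even_card_sym_diff:
  assumes "finite A" "finite B"
  shows "even (card (sym_diff A B)) \<longleftrightarrow> (even (card A) \<longleftrightarrow> even (card B))"
proof -
  have "sym_diff A B = (A \<union> B) - (A \<inter> B)" by blast
  moreover have "card ((A \<union> B) - (A \<inter> B)) = card (A \<union> B) - card (A \<inter> B)"
    using assms by (intro card_Diff_subset) auto
  ultimately have "card (sym_diff A B) = card (A \<union> B) - card (A \<inter> B)" by simp
  moreover have "card (A \<inter> B) \<le> card (A \<union> B)" using assms by (intro card_mono) auto
  moreover have "card (A \<union> B) + card (A \<inter> B) = card A + card B"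
    using card_Un_Int[OF assms] by simp
  ultimately have "card (sym_diff A B) + 2 * card (A \<inter> B) = card A + card B" by linarith
  then show ?thesis by (metis even_add even_mult_iff even_numeral)
qed

lemma even_card_Int_sym_diff:
  assumes "finite (A \<inter> B)" "finite (A \<inter> C)"
  shows "even (card (A \<inter> sym_diff B C)) \<longleftrightarrow> (even (card (A \<inter> B)) \<longleftrightarrow> even (card (A \<inter> C)))"
proof -
  have "A \<inter> sym_diff B C = sym_diff (A \<inter> B) (A \<inter> C)" by blast
  then show ?thesis using even_card_sym_diff[OF assms] by simp
qed

lemma Un_image_eq_imp_eq:
  assumes "A \<union> f ` A = B \<union> g ` B" "\<forall>x\<in>A \<union> B. \<not> P x" "\<forall>x\<in>A. P (f x)" "\<forall>x\<in>B. P (g x)"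
  shows "A = B"
  using assms by blast

subsection \<open>Subspaces and spans over GF(2)\<close>

definition gf2_subspace :: "'a set set \<Rightarrow> bool" where
  "gf2_subspace L \<longleftrightarrow> {} \<in> L \<and> (\<forall>x\<in>L. \<forall>y\<in>L. sym_diff x y \<in> L)"

lemma binary_linear_code_iff: "binary_linear_code n C \<longleftrightarrow> C \<subseteq> Pow {..<n} \<and> gf2_subspace C"
  unfolding binary_linear_code_def gf2_subspace_def by blast

lemma gf2_subspace_sym_diff: "gf2_subspace L \<Longrightarrow> x \<in> L \<Longrightarrow> y \<in> L \<Longrightarrow> sym_diff x y \<in> L"
  unfolding gf2_subspace_def by blast

lemma gf2_subspace_Pow: "gf2_subspace (Pow A)"
  unfolding gf2_subspace_def by blast

lemma binary_linear_codeD: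
  assumes "binary_linear_code n C" "x \<in> C"
  shows "x \<subseteq> {..<n}" "finite x"
  using assms finite_subset unfolding binary_linear_code_def by blast+

definition gf2_sum :: "'a set set \<Rightarrow> 'a set" where
  "gf2_sum T = {i. odd (card {h\<in>T. i \<in> h})}"

lemma gf2_span_eq_image: "gf2_span H = gf2_sum ` Pow (set H)"
  unfolding gf2_span_def gf2_sum_def by blast

lemma gf2_sum_empty [simp]: "gf2_sum {} = {}"
  by (simp add: gf2_sum_def)

lemma gf2_sum_singleton [simp]: "gf2_sum {h} = h"
proof -
  have "{g\<in>{h}. i \<in> g} = (if i \<in> h then {h} else {})" for i by auto
  then show ?thesis unfolding gf2_sum_def by auto
qed

lemma gf2_sum_sym_diff:
  assumes "finite T" "finite U"
  shows "gf2_sum (sym_diff T U) = sym_diff (gf2_sum T) (gf2_sum U)"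
proof -
  have "i \<in> gf2_sum (sym_diff T U) \<longleftrightarrow> i \<in> sym_diff (gf2_sum T) (gf2_sum U)" for i
  proof -
    have eq: "{h \<in> sym_diff T U. i \<in> h} = sym_diff {h\<in>T. i \<in> h} {h\<in>U. i \<in> h}" by blast
    have "finite {h\<in>T. i \<in> h}" "finite {h\<in>U. i \<in> h}" using assms by simp_all
    from even_card_sym_diff[OF this]
    have "even (card {h \<in> sym_diff T U. i \<in> h})
        \<longleftrightarrow> (even (card {h\<in>T. i \<in> h}) \<longleftrightarrow> even (card {h\<in>U. i \<in> h}))"
      by (simp only: eq)
    then show ?thesis unfolding gf2_sum_def by blast
  qed
  then show ?thesis by blast
qed

lemma gf2_span_row: "h \<in> set H \<Longrightarrow> h \<in> gf2_span H"
  unfolding gf2_span_eq_image by (rule image_eqI[of _ _ "{h}"]) auto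

lemma gf2_subspace_gf2_span: "gf2_subspace (gf2_span H)"
  unfolding gf2_subspace_def gf2_span_eq_image
proof (intro conjI ballI)
  show "{} \<in> gf2_sum ` Pow (set H)" by (rule image_eqI[of _ _ "{}"]) auto
  fix x y assume "x \<in> gf2_sum ` Pow (set H)" "y \<in> gf2_sum ` Pow (set H)"
  then obtain T U where TU: "T \<subseteq> set H" "U \<subseteq> set H" "x = gf2_sum T" "y = gf2_sum U" by blast
  then have "finite T" "finite U" by (auto intro: finite_subset)
  with TU have "sym_diff x y = gf2_sum (sym_diff T U)" by (simp add: gf2_sum_sym_diff)
  moreover have "sym_diff T U \<subseteq> set H" using TU by blast
  ultimately show "sym_diff x y \<in> gf2_sum ` Pow (set H)" by blast
qed

lemma gf2_span_least:
  assumes "gf2_subspace L" "set H \<subseteq> L"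
  shows "gf2_span H \<subseteq> L"
proof
  fix z assume "z \<in> gf2_span H"
  then obtain T where T: "T \<subseteq> set H" "z = gf2_sum T" unfolding gf2_span_eq_image by blast
  have "finite T" using T(1) finite_subset by blast
  then have "gf2_sum T \<in> L" using T(1)
  proof (induction T rule: finite_induct)
    case (insert h T)
    then have "insert h T = sym_diff T {h}" by blast
    then have "gf2_sum (insert h T) = sym_diff (gf2_sum T) h"
      using gf2_sum_sym_diff[of T "{h}"] insert.hyps by simp
    with insert assms show ?case by (simp add: gf2_subspace_sym_diff subset_iff)
  qed (use assms(1) in \<open>simp add: gf2_subspace_def\<close>)
  with T show "z \<in> L" by simp
qed

lemma gf2_span_mono: "set H \<subseteq> gf2_span H' \<Longrightarrow> gf2_span H \<subseteq> gf2_span H'"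
  by (rule gf2_span_least[OF gf2_subspace_gf2_span])

lemma gf2_span_subset_Pow: "(\<forall>h\<in>set H. h \<subseteq> A) \<Longrightarrow> gf2_span H \<subseteq> Pow A"
  by (rule gf2_span_least[OF gf2_subspace_Pow]) blast

lemma gf2_span_Cons: "gf2_span (h # H) = gf2_span H \<union> sym_diff h ` gf2_span H"
proof
  show "gf2_span (h # H) \<subseteq> gf2_span H \<union> sym_diff h ` gf2_span H"
  proof
    fix z assume "z \<in> gf2_span (h # H)"
    then obtain T where T: "T \<subseteq> insert h (set H)" "z = gf2_sum T" unfolding gf2_span_eq_image by auto
    have fin: "finite (T - {h})" using T(1) finite_subset by blast
    have span: "gf2_sum (T - {h}) \<in> gf2_span H" using T(1) unfolding gf2_span_eq_image by blast
    show "z \<in> gf2_span H \<union> sym_diff h ` gf2_span H"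
    proof (cases "h \<in> T")
      case True
      then have "T = sym_diff {h} (T - {h})" by blast
      then have "z = sym_diff h (gf2_sum (T - {h}))"
        using T(2) gf2_sum_sym_diff[OF _ fin, of "{h}"] by simp
      with span show ?thesis by blast
    next
      case False
      with T span show ?thesis by simp
    qed
  qed
  have "set H \<subseteq> gf2_span (h # H)" by (simp add: gf2_span_row subsetI)
  then have "gf2_span H \<subseteq> gf2_span (h # H)" by (rule gf2_span_mono)
  moreover have "h \<in> gf2_span (h # H)" by (simp add: gf2_span_row)
  ultimately show "gf2_span H \<union> sym_diff h ` gf2_span H \<subseteq> gf2_span (h # H)"
    using gf2_subspace_sym_diff[OF gf2_subspace_gf2_span] by blast
qed

lemma gf2_span_set_eq: "set H = set H' \<Longrightarrow> gf2_span H = gf2_span H'"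
  unfolding gf2_span_def by simp

lemma gf2_span_add_row:
  assumes f: "\<forall>h\<in>set H. f h = h \<or> f h = sym_diff h h0"
  shows "gf2_span (h0 # map f H) = gf2_span (h0 # H)"
proof -
  note closed = gf2_subspace_sym_diff[OF gf2_subspace_gf2_span]
  have "f h \<in> gf2_span (h0 # H)" if "h \<in> set H" for h
  proof -
    have "h \<in> gf2_span (h0 # H)" "h0 \<in> gf2_span (h0 # H)" using that by (simp_all add: gf2_span_row)
    moreover from f that have "f h = h \<or> f h = sym_diff h h0" by blast
    ultimately show ?thesis using closed[of h _ h0] by auto
  qed
  then have "gf2_span (h0 # map f H) \<subseteq> gf2_span (h0 # H)"
    by (intro gf2_span_mono) (auto intro: gf2_span_row)
  moreover have "h \<in> gf2_span (h0 # map f H)" if "h \<in> set H" for h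
  proof -
    have "f h \<in> gf2_span (h0 # map f H)" "h0 \<in> gf2_span (h0 # map f H)"
      using that by (simp_all add: gf2_span_row)
    moreover have "h = f h \<or> h = sym_diff (f h) h0" using f that by auto
    ultimately show ?thesis using closed[of "f h" _ h0] by auto
  qed
  then have "gf2_span (h0 # H) \<subseteq> gf2_span (h0 # map f H)"
    by (intro gf2_span_mono) (auto intro: gf2_span_row)
  ultimately show ?thesis by blast
qed

subsection \<open>Duality\<close>

lemma binary_linear_code_dual_code: "binary_linear_code n (dual_code n C)"
  unfolding binary_linear_code_iff gf2_subspace_def
proof (intro conjI ballI)
  show "dual_code n C \<subseteq> Pow {..<n}" "{} \<in> dual_code n C" unfolding dual_code_def by auto
  fix y z assume "y \<in> dual_code n C" "z \<in> dual_code n C"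
  then have yz: "y \<subseteq> {..<n}" "z \<subseteq> {..<n}"
    and even: "\<forall>x\<in>C. even (card (x \<inter> y)) \<and> even (card (x \<inter> z))"
    unfolding dual_code_def by auto
  have "even (card (x \<inter> sym_diff y z))" if "x \<in> C" for x
  proof -
    have "finite (x \<inter> y)" "finite (x \<inter> z)" using yz by (auto intro: finite_subset)
    with even that show ?thesis using even_card_Int_sym_diff by blast
  qed
  with yz show "sym_diff y z \<in> dual_code n C" unfolding dual_code_def by auto
qed

lemma gf2_subspace_dual_code: "gf2_subspace (dual_code n C)"
  using binary_linear_code_dual_code binary_linear_code_iff by blast

lemma sum_parity_sign_eq_0:
  assumes "finite G" "gf2_subspace G" "finite y" "g \<in> G" "odd (card (g \<inter> y))"
  shows "(\<Sum>x\<in>G. (-1::int) ^ card (x \<inter> y)) = 0"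
proof -
  let ?sign = "\<lambda>x. (-1::int) ^ card (x \<inter> y)"
  have "bij_betw (\<lambda>x. sym_diff x g) G G"
    by (rule bij_betw_byWitness[where f' = "\<lambda>x. sym_diff x g"])
      (use assms(2,4) gf2_subspace_sym_diff in auto)
  then have "(\<Sum>x\<in>G. ?sign (sym_diff x g)) = (\<Sum>x\<in>G. ?sign x)"
    by (rule sum.reindex_bij_betw)
  moreover have "?sign (sym_diff x g) = - ?sign x" for x
  proof -
    have "even (card (y \<inter> sym_diff x g)) \<longleftrightarrow> odd (card (y \<inter> x))"
      using even_card_Int_sym_diff[of y x g] assms(3,5) by (simp add: Int_commute)
    then show ?thesis by (auto simp: minus_one_power_iff Int_commute)
  qed
  ultimately show ?thesis by (simp add: sum_negf)
qed

text \<open>Double counting of the signs (-1)^|x \<inter> y| over x \<in> C and y \<subseteq> {..<n}.\<close>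

lemma card_mult_card_dual_code:
  assumes C: "binary_linear_code n C"
  shows "card C * card (dual_code n C) = 2 ^ n"
proof -
  let ?P = "Pow {..<n}" and ?D = "dual_code n C"
  let ?sign = "\<lambda>x y. (-1::int) ^ card (x \<inter> y)"
  have CP: "C \<subseteq> ?P" and subC: "gf2_subspace C" using C unfolding binary_linear_code_iff by blast+
  have finC: "finite C" using CP finite_subset by blast
  have DP: "?D \<subseteq> ?P" unfolding dual_code_def by blast
  have "(\<Sum>x\<in>C. ?sign x y) = (if y \<in> ?D then int (card C) else 0)" if y: "y \<in> ?P" for y
  proof (cases "y \<in> ?D")
    case True
    then show ?thesis unfolding dual_code_def by simp
  next
    case False
    then obtain g where g: "g \<in> C" "odd (card (g \<inter> y))" using y unfolding dual_code_def by auto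
    have "finite y" using y by (auto intro: finite_subset)
    with False g show ?thesis using sum_parity_sign_eq_0[OF finC subC] by simp
  qed
  then have "(\<Sum>y\<in>?P. \<Sum>x\<in>C. ?sign x y) = (\<Sum>y\<in>?P. if y \<in> ?D then int (card C) else 0)"
    by simp
  also have "\<dots> = int (card C * card ?D)"
    using DP by (simp add: sum.If_cases Int_absorb1)
  finally have rows: "(\<Sum>y\<in>?P. \<Sum>x\<in>C. ?sign x y) = int (card C * card ?D)" .
  have "(\<Sum>y\<in>?P. ?sign x y) = (if x = {} then 2 ^ n else 0)" if "x \<in> C" for x
  proof (cases "x = {}")
    case True
    then show ?thesis by (simp add: card_Pow)
  next
    case False
    then obtain j where "j \<in> x" by blast
    moreover have "x \<subseteq> {..<n}" "finite x" using binary_linear_codeD[OF C that] by blast+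
    ultimately have "(\<Sum>y\<in>?P. ?sign y x) = 0"
      using sum_parity_sign_eq_0[of ?P x "{j}"] gf2_subspace_Pow by auto
    with False show ?thesis by (simp add: Int_commute)
  qed
  then have "(\<Sum>x\<in>C. \<Sum>y\<in>?P. ?sign x y) = (\<Sum>x\<in>C. if x = {} then 2 ^ n else 0)"
    by simp
  also have "\<dots> = 2 ^ n" using subC finC by (simp add: gf2_subspace_def)
  moreover have "(\<Sum>x\<in>C. \<Sum>y\<in>?P. ?sign x y) = (\<Sum>y\<in>?P. \<Sum>x\<in>C. ?sign x y)"
    by (rule sum.swap)
  ultimately have "int (card C * card ?D) = 2 ^ n" using rows by simp
  then show ?thesis by (metis of_nat_eq_iff of_nat_numeral of_nat_power)
qed

lemma dual_dual_code:
  assumes C: "binary_linear_code n C"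
  shows "dual_code n (dual_code n C) = C"
proof -
  let ?D = "dual_code n C"
  have sub: "C \<subseteq> dual_code n ?D"
    using binary_linear_codeD[OF C] unfolding dual_code_def by (auto simp: Int_commute)
  have card: "card C * card ?D = 2 ^ n" "card ?D * card (dual_code n ?D) = 2 ^ n"
    using card_mult_card_dual_code[OF C] card_mult_card_dual_code[OF binary_linear_code_dual_code]
    by blast+
  then have "card ?D \<noteq> 0" by (metis mult_0_right power_not_zero zero_neq_numeral)
  with card have "card C = card (dual_code n ?D)" by (metis mult.commute mult_left_cancel)
  moreover have "finite (dual_code n ?D)"
    unfolding dual_code_def by (rule finite_subset[of _ "Pow {..<n}"]) auto
  ultimately show ?thesis using sub by (metis card_subset_eq)
qed

subsection \<open>Parity-check matrices\<close>

lemma is_pcm_row_dual: "is_pcm N C H \<Longrightarrow> h \<in> set H \<Longrightarrow> h \<in> dual_code N C"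
  unfolding is_pcm_def using gf2_span_row by blast

lemma is_pcmI:
  assumes "set H \<subseteq> dual_code N C" "dual_code N C \<subseteq> gf2_span H"
  shows "is_pcm N C H"
proof -
  have "gf2_span H \<subseteq> dual_code N C"
    using gf2_span_least assms(1) binary_linear_code_dual_code
    unfolding binary_linear_code_iff by blast
  with assms show ?thesis unfolding is_pcm_def dual_code_def by blast
qed

lemma is_pcm_exists:
  assumes "binary_linear_code N C"
  obtains H where "is_pcm N C H"
proof -
  have "finite (dual_code N C)"
    unfolding dual_code_def by (rule finite_subset[of _ "Pow {..<N}"]) auto
  then obtain H where "set H = dual_code N C" using finite_list by blast
  then have "is_pcm N C H" by (intro is_pcmI) (auto intro: gf2_span_row)
  then show ?thesis by (rule that)
qed

lemma mem_code_iff_pcm: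
  assumes C: "binary_linear_code N C" and H: "is_pcm N C H" and P: "P \<subseteq> {..<N}"
  shows "P \<in> C \<longleftrightarrow> (\<forall>h\<in>set H. even (card (h \<inter> P)))"
proof
  show "\<forall>h\<in>set H. even (card (h \<inter> P))" if "P \<in> C"
    using that is_pcm_row_dual[OF H] unfolding dual_code_def by (auto simp: Int_commute)
next
  assume rows: "\<forall>h\<in>set H. even (card (h \<inter> P))"
  have "finite P" using P finite_subset by blast
  then have "gf2_subspace {y. even (card (P \<inter> y))}"
    unfolding gf2_subspace_def by (auto simp: even_card_Int_sym_diff)
  with rows have "gf2_span H \<subseteq> {y. even (card (P \<inter> y))}"
    by (intro gf2_span_least) (auto simp: Int_commute)
  with H have "\<forall>y\<in>dual_code N C. even (card (y \<inter> P))"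
    unfolding is_pcm_def by (metis Int_commute mem_Collect_eq subsetD)
  with P have "P \<in> dual_code N (dual_code N C)" unfolding dual_code_def[of N "dual_code N C"] by blast
  then show "P \<in> C" using dual_dual_code[OF C] by simp
qed

lemma redundancy_le: "is_pcm N C H \<Longrightarrow> redundancy N C \<le> length H"
  unfolding redundancy_def by (intro Least_le) blast

lemma redundancy_attained:
  assumes "binary_linear_code N C"
  obtains H where "is_pcm N C H" "length H = redundancy N C"
proof -
  obtain H0 where "is_pcm N C H0" using is_pcm_exists[OF assms] .
  then have "\<exists>m H. is_pcm N C H \<and> length H = m" by blast
  from LeastI_ex[OF this] show ?thesis using that unfolding redundancy_def by blast
qed

lemma is_pcm_nonempty:
  assumes C: "binary_linear_code N C" and d: "has_min_dist C d" "2 \<le> d" and H: "is_pcm N C H"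
  shows "H \<noteq> []"
proof
  assume "H = []"
  obtain x j where "x \<in> C" "j \<in> x" using d(1) unfolding has_min_dist_def by blast
  then have "{j} \<subseteq> {..<N}" using binary_linear_codeD[OF C] by blast
  with \<open>H = []\<close> have "{j} \<in> C" using mem_code_iff_pcm[OF C H] by simp
  with d show False unfolding has_min_dist_def by fastforce
qed

subsection \<open>Stopping sets\<close>

lemma min_dist_eq: "has_min_dist C d \<Longrightarrow> min_dist C = d"
  unfolding has_min_dist_def min_dist_def by (intro Least_equality) auto

lemma stopping_redundancy_le:
  "is_pcm N C H \<Longrightarrow> stopping_distance N H = min_dist C \<Longrightarrow> stopping_redundancy N C \<le> length H"
  unfolding stopping_redundancy_def by (intro Least_le) blast

lemma stopping_set_codeword:
  assumes "binary_linear_code N C" "is_pcm N C H" "x \<in> C"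
  shows "stopping_set H x"
  using mem_code_iff_pcm[OF assms(1,2) binary_linear_codeD(1)[OF assms(1,3)]] assms(3)
  unfolding stopping_set_def by (metis odd_one)

lemma stopping_set_card_le_2_in_code:
  assumes C: "binary_linear_code N C" and H: "is_pcm N C H"
    and S: "S \<subseteq> {..<N}" "stopping_set H S" "card S \<le> 2"
  shows "S \<in> C"
proof -
  have "finite S" using S(1) finite_subset by blast
  have "even (card (h \<inter> S))" if "h \<in> set H" for h
  proof -
    have "card (h \<inter> S) \<le> 2" using card_mono[OF \<open>finite S\<close>, of "h \<inter> S"] S(3) by auto
    moreover have "card (h \<inter> S) \<noteq> 1" using S(2) that unfolding stopping_set_def by blast
    ultimately show ?thesis by (cases "card (h \<inter> S)") (auto simp: numeral_eq_Suc le_Suc_eq)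
  qed
  with mem_code_iff_pcm[OF C H S(1)] show ?thesis by blast
qed

lemma stopping_distance_eqI:
  assumes C: "binary_linear_code N C" and d: "has_min_dist C d" and H: "is_pcm N C H"
    and large: "\<And>S. S \<subseteq> {..<N} \<Longrightarrow> S \<noteq> {} \<Longrightarrow> stopping_set H S \<Longrightarrow> d \<le> card S"
  shows "stopping_distance N H = d"
  unfolding stopping_distance_def
proof (rule Least_equality)
  obtain x where "x \<in> C" "x \<noteq> {}" "card x = d" using d unfolding has_min_dist_def by blast
  then show "\<exists>S\<subseteq>{..<N}. S \<noteq> {} \<and> stopping_set H S \<and> card S = d"
    using stopping_set_codeword[OF C H] binary_linear_codeD[OF C] by blast
qed (use large in blast)

lemma stopping_distance_min_dist_3:
  assumes C: "binary_linear_code N C" and d: "has_min_dist C 3" and H: "is_pcm N C H"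
  shows "stopping_distance N H = 3"
proof (rule stopping_distance_eqI[OF C d H])
  fix S assume S: "S \<subseteq> {..<N}" "S \<noteq> {}" "stopping_set H S"
  show "3 \<le> card S"
  proof (rule ccontr)
    assume "\<not> 3 \<le> card S"
    then have "S \<in> C" using stopping_set_card_le_2_in_code[OF C H S(1,3)] by simp
    with S(2) d \<open>\<not> 3 \<le> card S\<close> show False unfolding has_min_dist_def by blast
  qed
qed

lemma stopping_redundancy_eq_redundancy:
  assumes C: "binary_linear_code N C" and d: "has_min_dist C 3"
  shows "stopping_redundancy N C = redundancy N C"
proof -
  have "stopping_distance N H = min_dist C" if "is_pcm N C H" for H
    using stopping_distance_min_dist_3[OF C d that] min_dist_eq[OF d] by simp
  then have "(\<lambda>m. \<exists>H. is_pcm N C H \<and> stopping_distance N H = min_dist C \<and> length H = m)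
      = (\<lambda>m. \<exists>H. is_pcm N C H \<and> length H = m)" by blast
  then show ?thesis unfolding stopping_redundancy_def redundancy_def by simp
qed

lemma stopping_set_complemented_rows:
  assumes S: "S \<subseteq> U" "card S = 3" and stop: "stopping_set (H @ map (\<lambda>h. U - h) H) S"
  obtains P where "P \<subseteq> S" "card P = 2" "\<forall>g\<in>set (H @ map (\<lambda>h. U - h) H). even (card (g \<inter> P))"
proof -
  have fin: "finite S" using S(2) by (intro card_ge_0_finite) simp
  have unsplit: "S \<inter> h = {} \<or> S \<subseteq> h" if "h \<in> set H" for h
  proof -
    have "card (h \<inter> S) \<noteq> 1" "card ((U - h) \<inter> S) \<noteq> 1"
      using stop that unfolding stopping_set_def by auto
    moreover have "h \<inter> S = S \<inter> h" "(U - h) \<inter> S = S - h" using S(1) by blast+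
    ultimately have "card (S \<inter> h) \<noteq> 1" "card (S - h) \<noteq> 1" by simp_all
    moreover have "card S = card (S \<inter> h) + card (S - h)" by (rule card_Int_Diff[OF fin])
    ultimately have "card (S \<inter> h) = 0 \<or> card (S - h) = 0" using S(2) by presburger
    with fin show ?thesis by auto
  qed
  obtain a b c where abc: "S = {a, b, c}" "a \<noteq> b" "a \<noteq> c" "b \<noteq> c"
    using S(2) by (metis card_3_iff)
  have ab: "a \<in> S" "b \<in> S" using abc(1) by auto
  have "even (card (g \<inter> {a, b}))" if "g \<in> set (H @ map (\<lambda>h. U - h) H)" for g
  proof -
    from that obtain h where h: "h \<in> set H" "g = h \<or> g = U - h" by auto
    from unsplit[OF h(1)] ab have "(a \<notin> h \<and> b \<notin> h) \<or> (a \<in> h \<and> b \<in> h)" by blast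
    with h(2) ab S(1) have "g \<inter> {a, b} = {} \<or> g \<inter> {a, b} = {a, b}" by blast
    with abc(2) show ?thesis by auto
  qed
  with that[of "{a, b}"] ab abc(2) show ?thesis by simp
qed

lemma stopping_distance_complemented_rows:
  assumes C: "binary_linear_code N C" and d: "has_min_dist C 4"
    and H: "is_pcm N C (H @ map (\<lambda>h. {..<N} - h) H)"
  shows "stopping_distance N (H @ map (\<lambda>h. {..<N} - h) H) = 4"
    (is "stopping_distance _ ?H' = 4")
proof (rule stopping_distance_eqI[OF C d H])
  fix S assume S: "S \<subseteq> {..<N}" "S \<noteq> {}" "stopping_set ?H' S"
  have small: "\<not> (P \<in> C \<and> P \<noteq> {} \<and> card P < 4)" for P
    using d unfolding has_min_dist_def by auto
  show "4 \<le> card S"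
  proof (rule ccontr)
    assume "\<not> 4 \<le> card S"
    then consider "card S \<le> 2" | "card S = 3" by linarith
    then show False
    proof cases
      case 1
      then have "S \<in> C" using stopping_set_card_le_2_in_code[OF C H S(1,3)] by blast
      with S(2) 1 small[of S] show False by simp
    next
      case 2
      then obtain P where P: "P \<subseteq> S" "card P = 2" "\<forall>g\<in>set ?H'. even (card (g \<inter> P))"
        using stopping_set_complemented_rows[OF S(1) _ S(3)] by blast
      then have "P \<in> C" using mem_code_iff_pcm[OF C H] S(1) by blast
      with P(2) small[of P] show False by auto
    qed
  qed
qed

subsection \<open>The extended code\<close>

definition parity_extend :: "nat \<Rightarrow> nat set \<Rightarrow> nat set" where
  "parity_extend n x = (if odd (card x) then insert n x else x)"

lemma extended_code_eq_image: "extended_code n C = parity_extend n ` C"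
  unfolding extended_code_def parity_extend_def by simp

lemma parity_extend_subset: "x \<subseteq> {..<n} \<Longrightarrow> parity_extend n x \<subseteq> {..<n+1}"
  unfolding parity_extend_def by auto

lemma parity_extend_Int: "n \<notin> y \<Longrightarrow> parity_extend n x \<inter> y = x \<inter> y"
  unfolding parity_extend_def by auto

lemma card_parity_extend:
  "finite x \<Longrightarrow> n \<notin> x \<Longrightarrow> card (parity_extend n x) = (if odd (card x) then card x + 1 else card x)"
  unfolding parity_extend_def by simp

lemma parity_extend_sym_diff:
  assumes "finite x" "finite y" "n \<notin> x" "n \<notin> y"
  shows "sym_diff (parity_extend n x) (parity_extend n y) = parity_extend n (sym_diff x y)"
  using assms even_card_sym_diff[OF assms(1,2)] unfolding parity_extend_def by auto

lemma binary_linear_code_extended_code: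
  assumes C: "binary_linear_code n C"
  shows "binary_linear_code (n+1) (extended_code n C)"
  unfolding binary_linear_code_iff gf2_subspace_def extended_code_eq_image
proof (intro conjI ballI)
  show "parity_extend n ` C \<subseteq> Pow {..<n+1}"
    using parity_extend_subset binary_linear_codeD[OF C] by blast
  show "{} \<in> parity_extend n ` C"
    using C unfolding binary_linear_code_def parity_extend_def by force
  fix a b assume "a \<in> parity_extend n ` C" "b \<in> parity_extend n ` C"
  then obtain x y where xy: "x \<in> C" "y \<in> C" "a = parity_extend n x" "b = parity_extend n y" by blast
  have "finite x" "finite y" "n \<notin> x" "n \<notin> y" using binary_linear_codeD[OF C] xy(1,2) by auto
  then have "sym_diff a b = parity_extend n (sym_diff x y)"
    unfolding xy(3,4) by (rule parity_extend_sym_diff)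
  moreover have "sym_diff x y \<in> C" using C xy(1,2) unfolding binary_linear_code_def by blast
  ultimately show "sym_diff a b \<in> parity_extend n ` C" by blast
qed

lemma card_extended_code:
  assumes C: "binary_linear_code n C"
  shows "card (extended_code n C) = card C"
  unfolding extended_code_eq_image
proof (rule card_image, rule inj_onI)
  fix x y assume "x \<in> C" "y \<in> C" "parity_extend n x = parity_extend n y"
  moreover have "parity_extend n z \<inter> {..<n} = z" if "z \<in> C" for z
    using parity_extend_Int[of n "{..<n}" z] binary_linear_codeD[OF C that] by auto
  ultimately show "x = y" by metis
qed

lemma has_min_dist_extended_code:
  assumes C: "binary_linear_code n C" and d: "has_min_dist C 3"
  shows "has_min_dist (extended_code n C) 4"
  unfolding has_min_dist_def extended_code_eq_image
proof (intro conjI ballI impI)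
  obtain x where x: "x \<in> C" "card x = 3" using d unfolding has_min_dist_def by blast
  have "finite x" "n \<notin> x" using binary_linear_codeD[OF C x(1)] by auto
  with x(2) have "card (parity_extend n x) = 4" by (simp add: card_parity_extend)
  moreover from this have "parity_extend n x \<noteq> {}" by auto
  ultimately show "\<exists>a\<in>parity_extend n ` C. a \<noteq> {} \<and> card a = 4" using x(1) by blast
next
  fix a assume a: "a \<in> parity_extend n ` C" "a \<noteq> {}"
  then obtain x where x: "x \<in> C" "a = parity_extend n x" by blast
  have fin: "finite x" "n \<notin> x" using binary_linear_codeD[OF C x(1)] by auto
  have "x \<noteq> {}" using a x unfolding parity_extend_def by auto
  with x(1) d have "3 \<le> card x" unfolding has_min_dist_def by blast
  moreover have "card x \<le> card a" "even (card a)"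
    using fin x(2) by (simp_all add: card_parity_extend)
  ultimately show "4 \<le> card a" by presburger
qed

lemma dual_extended_code_restrict:
  assumes C: "binary_linear_code n C" and y: "y \<subseteq> {..<n}"
  shows "y \<in> dual_code (n+1) (extended_code n C) \<longleftrightarrow> y \<in> dual_code n C"
proof -
  have "n \<notin> y" using y by auto
  with y show ?thesis
    unfolding dual_code_def extended_code_eq_image by (auto simp: parity_extend_Int)
qed

lemma all_ones_in_dual_extended_code:
  assumes C: "binary_linear_code n C"
  shows "{..<n+1} \<in> dual_code (n+1) (extended_code n C)"
proof -
  have "even (card (parity_extend n x \<inter> {..<n+1}))" if "x \<in> C" for x
  proof -
    have "x \<subseteq> {..<n}" "finite x" using binary_linear_codeD[OF C that] by blast+
    moreover from this have "n \<notin> x" by auto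
    ultimately show ?thesis using parity_extend_subset[of x n] card_parity_extend[of x n]
      by (auto simp: Int_absorb2)
  qed
  then show ?thesis unfolding dual_code_def extended_code_eq_image by auto
qed

lemma dual_code_subset_dual_extended_code:
  assumes C: "binary_linear_code n C"
  shows "dual_code n C \<subseteq> dual_code (n+1) (extended_code n C)"
proof
  fix y assume y: "y \<in> dual_code n C"
  then have "y \<subseteq> {..<n}" unfolding dual_code_def by blast
  with y show "y \<in> dual_code (n+1) (extended_code n C)" using dual_extended_code_restrict[OF C] by blast
qed

lemma dual_extended_code:
  assumes C: "binary_linear_code n C"
  shows "dual_code (n+1) (extended_code n C) = dual_code n C \<union> sym_diff {..<n+1} ` dual_code n C"
    (is "?D' = ?D \<union> sym_diff ?u ` ?D")
proof
  have sub: "?D \<subseteq> ?D'" by (rule dual_code_subset_dual_extended_code[OF C])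
  moreover have "sym_diff ?u ` ?D \<subseteq> ?D'"
    using sub all_ones_in_dual_extended_code[OF C] gf2_subspace_sym_diff[OF gf2_subspace_dual_code]
    by blast
  ultimately show "?D \<union> sym_diff ?u ` ?D \<subseteq> ?D'" by blast
  show "?D' \<subseteq> ?D \<union> sym_diff ?u ` ?D"
  proof
    fix y assume y: "y \<in> ?D'"
    then have "y \<subseteq> ?u" unfolding dual_code_def by blast
    show "y \<in> ?D \<union> sym_diff ?u ` ?D"
    proof (cases "n \<in> y")
      case True
      have "sym_diff ?u y \<in> ?D'"
        using y all_ones_in_dual_extended_code[OF C] gf2_subspace_sym_diff[OF gf2_subspace_dual_code]
        by blast
      moreover have "sym_diff ?u y \<subseteq> {..<n}" using True \<open>y \<subseteq> ?u\<close> by (auto simp: less_Suc_eq)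
      ultimately have "sym_diff ?u y \<in> ?D" using dual_extended_code_restrict[OF C] by blast
      moreover have "y = sym_diff ?u (sym_diff ?u y)" using \<open>y \<subseteq> ?u\<close> by blast
      ultimately show ?thesis by blast
    next
      case False
      then have "y \<subseteq> {..<n}" using \<open>y \<subseteq> ?u\<close> by (auto simp: less_Suc_eq)
      with y show ?thesis using dual_extended_code_restrict[OF C] by blast
    qed
  qed
qed

lemma is_pcm_extended_codeI:
  assumes C: "binary_linear_code n C" and H: "is_pcm n C H"
    and rows: "set H' \<subseteq> dual_code (n+1) (extended_code n C)"
    and span: "set H \<subseteq> gf2_span H'" "{..<n+1} \<in> gf2_span H'"
  shows "is_pcm (n+1) (extended_code n C) H'"
proof (rule is_pcmI[OF rows])
  have "dual_code n C \<subseteq> gf2_span H'" using gf2_span_mono[OF span(1)] H unfolding is_pcm_def by blast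
  then show "dual_code (n+1) (extended_code n C) \<subseteq> gf2_span H'"
    unfolding dual_extended_code[OF C]
    using span(2) gf2_subspace_sym_diff[OF gf2_subspace_gf2_span] by blast
qed

lemma is_pcm_extended_code_append:
  assumes C: "binary_linear_code n C" and H: "is_pcm n C H"
  shows "is_pcm (n+1) (extended_code n C) (H @ [{..<n+1}])"
proof (rule is_pcm_extended_codeI[OF C H])
  show "set (H @ [{..<n+1}]) \<subseteq> dual_code (n+1) (extended_code n C)"
    using is_pcm_row_dual[OF H] dual_code_subset_dual_extended_code[OF C]
      all_ones_in_dual_extended_code[OF C] by auto
qed (auto intro: gf2_span_row)

lemma is_pcm_extended_code_obtain_parity_row:
  assumes C: "binary_linear_code n C" and H': "is_pcm (n+1) (extended_code n C) H'"
  obtains h0 where "h0 \<in> set H'" "n \<in> h0"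
proof -
  have "{..<n+1} \<in> gf2_span H'"
    using H' all_ones_in_dual_extended_code[OF C] unfolding is_pcm_def by simp
  moreover have "gf2_span H' \<subseteq> Pow (- {n})" if "\<forall>h\<in>set H'. n \<notin> h"
    using that by (intro gf2_span_subset_Pow) auto
  ultimately have "\<exists>h0\<in>set H'. n \<in> h0" by auto
  with that show ?thesis by blast
qed

text \<open>Clearing the parity coordinate from the other rows with a row h0 containing it gives H
  with span H' = span H \<union> (h0 + span H); on words avoiding the parity coordinate this must agree
  with the decomposition of the dual of the extended code, so H is a parity-check matrix of C.\<close>

lemma is_pcm_of_extended_code:
  assumes C: "binary_linear_code n C" and H': "is_pcm (n+1) (extended_code n C) H'"
  obtains H where "is_pcm n C H" "length H' = length H + 1"
proof -
  let ?u = "{..<n+1}"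
  obtain h0 xs ys where h0: "n \<in> h0" "h0 \<subseteq> ?u" and H'_eq: "H' = xs @ h0 # ys"
    using is_pcm_extended_code_obtain_parity_row[OF C H'] H' unfolding is_pcm_def
    by (metis split_list)
  define f where "f h = (if n \<in> h then sym_diff h h0 else h)" for h
  define H where "H = map f (xs @ ys)"
  have rows: "\<forall>g\<in>set H. g \<subseteq> {..<n}"
  proof
    fix g assume "g \<in> set H"
    then obtain h where h: "h \<in> set (xs @ ys)" "g = f h" unfolding H_def by auto
    then have "h \<subseteq> ?u" using H' unfolding is_pcm_def H'_eq by auto
    with h(2) h0 show "g \<subseteq> {..<n}" unfolding f_def by (auto simp: less_Suc_eq)
  qed
  have "\<forall>h\<in>set (xs @ ys). f h = h \<or> f h = sym_diff h h0" unfolding f_def by simp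
  then have "gf2_span (h0 # H) = gf2_span (h0 # xs @ ys)" unfolding H_def by (rule gf2_span_add_row)
  moreover have "gf2_span H' = gf2_span (h0 # xs @ ys)" unfolding H'_eq by (rule gf2_span_set_eq) auto
  ultimately have "gf2_span H' = gf2_span (h0 # H)" by simp
  then have "dual_code n C \<union> sym_diff ?u ` dual_code n C = gf2_span H \<union> sym_diff h0 ` gf2_span H"
    using H' dual_extended_code[OF C] gf2_span_Cons unfolding is_pcm_def by simp
  moreover have "\<forall>y\<in>dual_code n C \<union> gf2_span H. n \<notin> y"
    "\<forall>y\<in>dual_code n C. n \<in> sym_diff ?u y" "\<forall>z\<in>gf2_span H. n \<in> sym_diff h0 z"
    using gf2_span_subset_Pow[OF rows] h0(1) unfolding dual_code_def by auto
  ultimately have "dual_code n C = gf2_span H" by (rule Un_image_eq_imp_eq)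
  with rows have "is_pcm n C H" unfolding is_pcm_def by blast
  moreover have "length H' = length H + 1" unfolding H_def H'_eq by simp
  ultimately show ?thesis by (rule that)
qed

lemma redundancy_extended_code:
  assumes C: "binary_linear_code n C"
  shows "redundancy (n+1) (extended_code n C) = redundancy n C + 1"
proof (rule antisym)
  obtain H where H: "is_pcm n C H" "length H = redundancy n C" using redundancy_attained[OF C] .
  have "redundancy (n+1) (extended_code n C) \<le> length (H @ [{..<n+1}])"
    by (rule redundancy_le[OF is_pcm_extended_code_append[OF C H(1)]])
  with H(2) show "redundancy (n+1) (extended_code n C) \<le> redundancy n C + 1" by simp
next
  obtain H' where H': "is_pcm (n+1) (extended_code n C) H'"
      "length H' = redundancy (n+1) (extended_code n C)"
    using redundancy_attained[OF binary_linear_code_extended_code[OF C]] .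
  obtain H where "is_pcm n C H" "length H' = length H + 1"
    using is_pcm_of_extended_code[OF C H'(1)] .
  with H'(2) show "redundancy n C + 1 \<le> redundancy (n+1) (extended_code n C)"
    using redundancy_le[of n C H] by simp
qed

lemma is_pcm_extended_code_complemented:
  assumes C: "binary_linear_code n C" and H: "is_pcm n C H" "H \<noteq> []"
  shows "is_pcm (n+1) (extended_code n C) (H @ map (\<lambda>h. {..<n+1} - h) H)"
    (is "is_pcm _ _ ?H'")
proof (rule is_pcm_extended_codeI[OF C H(1)])
  let ?u = "{..<n+1}"
  have rows: "h \<in> dual_code n C" "h \<subseteq> {..<n}" if "h \<in> set H" for h
    using is_pcm_row_dual[OF H(1) that] unfolding dual_code_def by auto
  have "h \<in> dual_code (n+1) (extended_code n C) \<and> ?u - h \<in> dual_code (n+1) (extended_code n C)"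
    if "h \<in> set H" for h
  proof -
    have "?u - h = sym_diff ?u h" using rows(2)[OF that] by auto
    then show ?thesis unfolding dual_extended_code[OF C] using rows(1)[OF that] by auto
  qed
  then show "set ?H' \<subseteq> dual_code (n+1) (extended_code n C)" by auto
  show "set H \<subseteq> gf2_span ?H'" using gf2_span_row[of _ ?H'] by auto
  obtain h0 where h0: "h0 \<in> set H" using H(2) by (cases H) auto
  have "h0 \<in> gf2_span ?H'" "?u - h0 \<in> gf2_span ?H'" using h0 by (auto intro: gf2_span_row)
  then have "sym_diff h0 (?u - h0) \<in> gf2_span ?H'"
    by (rule gf2_subspace_sym_diff[OF gf2_subspace_gf2_span])
  moreover have "sym_diff h0 (?u - h0) = ?u" using rows(2)[OF h0] by auto
  ultimately show "?u \<in> gf2_span ?H'" by simp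
qed

lemma stopping_redundancy_extended_code_le:
  assumes C: "binary_linear_code n C" and d: "has_min_dist C 3" and H: "is_pcm n C H"
  shows "stopping_redundancy (n+1) (extended_code n C) \<le> 2 * length H"
proof -
  let ?H' = "H @ map (\<lambda>h. {..<n+1} - h) H"
  note d' = has_min_dist_extended_code[OF C d]
  have "H \<noteq> []" using is_pcm_nonempty[OF C d _ H] by simp
  then have H': "is_pcm (n+1) (extended_code n C) ?H'"
    by (rule is_pcm_extended_code_complemented[OF C H])
  moreover have "stopping_distance (n+1) ?H' = min_dist (extended_code n C)"
    using stopping_distance_complemented_rows[OF binary_linear_code_extended_code[OF C] d' H']
      min_dist_eq[OF d'] by simp
  ultimately have "stopping_redundancy (n+1) (extended_code n C) \<le> length ?H'"
    by (rule stopping_redundancy_le)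
  then show ?thesis by simp
qed

theorem theorem9:
  fixes n k :: nat and C :: "nat set set"
  assumes "binary_linear_code n C" and "code_dim C k" and "has_min_dist C 3"
  shows "binary_linear_code (n + 1) (extended_code n C)
       \<and> code_dim (extended_code n C) k
       \<and> has_min_dist (extended_code n C) 4
       \<and> stopping_redundancy (n + 1) (extended_code n C) \<le> 2 * stopping_redundancy n C
       \<and> 2 * stopping_redundancy n C = 2 * redundancy (n + 1) (extended_code n C) - 2"
proof (intro conjI)
  note C = assms(1) and d = assms(3)
  show "binary_linear_code (n + 1) (extended_code n C)" by (rule binary_linear_code_extended_code[OF C])
  show "code_dim (extended_code n C) k"
    using assms(2) card_extended_code[OF C] unfolding code_dim_def by simp
  show "has_min_dist (extended_code n C) 4" by (rule has_min_dist_extended_code[OF C d])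
  have rho: "stopping_redundancy n C = redundancy n C"
    by (rule stopping_redundancy_eq_redundancy[OF C d])
  obtain H where H: "is_pcm n C H" "length H = redundancy n C" using redundancy_attained[OF C] .
  show "stopping_redundancy (n + 1) (extended_code n C) \<le> 2 * stopping_redundancy n C"
    using stopping_redundancy_extended_code_le[OF C d H(1)] H(2) rho by simp
  show "2 * stopping_redundancy n C = 2 * redundancy (n + 1) (extended_code n C) - 2"
    using redundancy_extended_code[OF C] rho by simp
qed

end
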